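(* Assume $\alpha_i>0$, $\alpha_i+u>0$, $\alpha_i+v>0$ for all $i$, and $u+v>0$. Let $\mathcal P$ be the horizontal path with vertices $(k+j,k)$, $0\le j\le N$, and labels $\boldsymbol\beta=(\beta_1,\dots,\beta_N)$, $\beta_j=\alpha_{k+j}$ (indices mod $N$). Then the probability density $\mathrm P^{\mathcal P}_{\mathrm{LG}}$ on $\mathbb R^N$ coincides with $\mathrm P^{\boldsymbol\beta,u,v}_{\mathrm{stat\,LG}}$.
   Context: With $f_\theta(x)=e^{-\theta x-e^{-x}}$, for $\boldsymbol\lambda=(\lambda_i^{(j)})_{i\in\{1,2\},0\le j\le N}\in\mathbb R^{2N+2}$ define $$\mathrm{wt}^{\mathcal{GP}}(\boldsymbol\lambda)=e^{-u(\lambda_1^{(0)}-\lambda_2^{(0)})-v(\lambda_1^{(N)}-\lambda_2^{(N)})}\prod_{j=1}^N\Big[\prod_{i=1}^2f_{\beta_j}(\lambda_i^{(j)}-\lambda_i^{(j-1)})\Big]e^{-e^{-(\lambda_1^{(j-1)}-\lambda_2^{(j)})}},$$ $\mathrm{wt}^{\mathcal P}(\boldsymbol\lambda_1)=\int_{\mathbb R^{N+1}}\mathrm{wt}^{\mathcal{GP}}(\boldsymbol\lambda_1,\boldsymbol\lambda_2)d\boldsymbol\lambda_2$, $Z=\int_{\mathbb R^N}\mathrm{wt}^{\mathcal P}(\boldsymbol\lambda_1)d\lambda_1^{(1)}\cdots d\lambda_1^{(N)}$ for fixed $\lambda_1^{(0)}$ (finite and independent of $\lambda_1^{(0)}$ when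 $u+v>0$), and $\mathrm P^{\mathcal P}_{\mathrm{LG}}(\mathbf L_1)=\mathrm{wt}^{\mathcal P}(\boldsymbol\lambda_1)/Z$ with $L_1(j)=\lambda_1^{(j)}-\lambda_1^{(0)}$. $\mathbb P^{\boldsymbol\beta,\boldsymbol\beta}_{\mathrm{LGRW}}$ is the density of two independent walks $\mathbf L_1,\mathbf L_2\in\mathbb R^N$, $L_i(0)=0$, with independent increments $L_i(j)-L_i(j-1)$ of density $f_{\beta_j}/\Gamma(\beta_j)$. $V(\mathbf L)=\big(\sum_{j=1}^Ne^{L_2(j)-L_1(j-1)}\big)^{-(u+v)}e^{-v(L_1(N)-L_2(N))}$, $\mathbb P^{\boldsymbol\beta,u,v}_{\mathrm{stat\,LG}}=V\mathbb P^{\boldsymbol\beta,\boldsymbol\beta}_{\mathrm{LGRW}}/\mathbb E^{\boldsymbol\beta,\boldsymbol\beta}_{\mathrm{LGRW}}[V]$, and $\mathrm P^{\boldsymbol\beta,u,v}_{\mathrm{stat\,LG}}$ is the marginal density of $\mathbf L_1$. *)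

theory Defs
  imports "HOL-Analysis.Analysis"
begin

definition fLG :: "real \<Rightarrow> real \<Rightarrow> real" where
  "fLG \<theta> x = exp (- \<theta> * x - exp (- x))"

text \<open>Points of R^(N+1) are functions nat => real read on the indices 0..N
  (lambda^(0),...,lambda^(N)); points of R^N are functions read on 1..N.\<close>

definition wtGP :: "nat \<Rightarrow> (nat \<Rightarrow> real) \<Rightarrow> real \<Rightarrow> real \<Rightarrow>
    (nat \<Rightarrow> real) \<Rightarrow> (nat \<Rightarrow> real) \<Rightarrow> real" where
  "wtGP N \<beta> u v l1 l2 =
     exp (- u * (l1 0 - l2 0) - v * (l1 N - l2 N)) *
     (\<Prod>j\<in>{1..N}. fLG (\<beta> j) (l1 j - l1 (j - 1)) * fLG (\<beta> j) (l2 j - l2 (j - 1))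
                     * exp (- exp (- (l1 (j - 1) - l2 j))))"

definition wtP :: "nat \<Rightarrow> (nat \<Rightarrow> real) \<Rightarrow> real \<Rightarrow> real \<Rightarrow> (nat \<Rightarrow> real) \<Rightarrow> ennreal" where
  "wtP N \<beta> u v l1 =
     (\<integral>\<^sup>+ l2. ennreal (wtGP N \<beta> u v l1 l2) \<partial>(PiM {..N} (\<lambda>_. lborel)))"

definition ZLG :: "nat \<Rightarrow> (nat \<Rightarrow> real) \<Rightarrow> real \<Rightarrow> real \<Rightarrow> real \<Rightarrow> ennreal" where
  "ZLG N \<beta> u v a =
     (\<integral>\<^sup>+ l. wtP N \<beta> u v (l(0 := a)) \<partial>(PiM {1..N} (\<lambda>_. lborel)))"

definition PLG :: "nat \<Rightarrow> (nat \<Rightarrow> real) \<Rightarrow> real \<Rightarrow> real \<Rightarrow> real \<Rightarrow> (nat \<Rightarrow> real) \<Rightarrow> ennreal" where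
  "PLG N \<beta> u v a L =
     wtP N \<beta> u v (\<lambda>j. if j = 0 then a else a + L j) / ZLG N \<beta> u v a"

definition path0 :: "(nat \<Rightarrow> real) \<Rightarrow> nat \<Rightarrow> real" where
  "path0 L j = (if j = 0 then 0 else L j)"

definition LGRW :: "nat \<Rightarrow> (nat \<Rightarrow> real) \<Rightarrow> (nat \<Rightarrow> real) \<Rightarrow> (nat \<Rightarrow> real) \<Rightarrow> real" where
  "LGRW N \<beta> L1 L2 =
     (\<Prod>j\<in>{1..N}. fLG (\<beta> j) (path0 L1 j - path0 L1 (j - 1)) / Gamma (\<beta> j)
                   * (fLG (\<beta> j) (path0 L2 j - path0 L2 (j - 1)) / Gamma (\<beta> j)))"

definition Vfun :: "nat \<Rightarrow> real \<Rightarrow> real \<Rightarrow> (nat \<Rightarrow> real) \<Rightarrow> (nat \<Rightarrow> real) \<Rightarrow> real" where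
  "Vfun N u v L1 L2 =
     (\<Sum>j\<in>{1..N}. exp (path0 L2 j - path0 L1 (j - 1))) powr (- (u + v))
     * exp (- v * (path0 L1 N - path0 L2 N))"

definition EV :: "nat \<Rightarrow> (nat \<Rightarrow> real) \<Rightarrow> real \<Rightarrow> real \<Rightarrow> ennreal" where
  "EV N \<beta> u v =
     (\<integral>\<^sup>+ L1. \<integral>\<^sup>+ L2. ennreal (Vfun N u v L1 L2 * LGRW N \<beta> L1 L2)
        \<partial>(PiM {1..N} (\<lambda>_. lborel)) \<partial>(PiM {1..N} (\<lambda>_. lborel)))"

text \<open>Marginal density of L_1 under the stationary log-gamma measure.\<close>
definition PstatLG :: "nat \<Rightarrow> (nat \<Rightarrow> real) \<Rightarrow> real \<Rightarrow> real \<Rightarrow> (nat \<Rightarrow> real) \<Rightarrow> ennreal" where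
  "PstatLG N \<beta> u v L1 =
     (\<integral>\<^sup>+ L2. ennreal (Vfun N u v L1 L2 * LGRW N \<beta> L1 L2) \<partial>(PiM {1..N} (\<lambda>_. lborel)))
     / EV N \<beta> u v"

end

theory Submission
  imports Defs
begin

(* Write the second path as lambda_2^(j) = a + t + L_2(j) with L_2(0) = 0, where a = lambda_1^(0):
   this shear of R^(N+1) has unit Jacobian. In these coordinates wt^GP factorises as
   exp((u+v) t - S e^t) times exp(-v (L_1(N) - L_2(N))) and the unnormalised log-gamma weights of
   L_1 and L_2, with S = sum_j exp(L_2(j) - L_1(j-1)). Integrating out t gives Gamma(u+v) S^-(u+v),
   so wt^P(lambda_1) = Gamma(u+v) (prod_j Gamma(beta_j))^2 * int V dP_LGRW(L_1, .). The same constant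
   relates Z to E[V], and it cancels in the quotient. *)

lemma Gamma_has_integral_Ioi:
  fixes s :: real assumes "s > 0"
  shows "((\<lambda>x. x powr (s - 1) / exp x) has_integral Gamma s) {0<..}"
proof -
  have "negligible {0::real}" by simp
  then have "((\<lambda>x. x powr (s - 1) / exp x) has_integral Gamma s) {0<..}
      \<longleftrightarrow> ((\<lambda>x. x powr (s - 1) / exp x) has_integral Gamma s) {0..}"
    by (intro has_integral_spike_set_eq; rule negligible_subset) auto
  with Gamma_integral_real[OF assms] show ?thesis by simp
qed

lemma nn_integral_exp_minus_exp:
  fixes s S :: real
  assumes s: "s > 0" and S: "S > 0"
  shows "(\<integral>\<^sup>+t. ennreal (exp (s * t - S * exp t)) \<partial>lborel) = ennreal (Gamma s * S powr - s)"
proof -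
  define f where "f x = x powr (s - 1) / exp x" for x :: real
  have img: "(\<lambda>t. S * exp t) ` UNIV = {0<..}"
  proof (intro equalityI subsetI)
    fix x :: real assume "x \<in> {0<..}"
    then have "x = S * exp (ln (x / S))" using S by simp
    then show "x \<in> range (\<lambda>t. S * exp t)" by blast
  qed (use S in auto)
  have "f absolutely_integrable_on {0<..} \<and> integral {0<..} f = Gamma s"
    using Gamma_has_integral_Ioi[OF s] unfolding f_def
    by (auto intro!: nonnegative_absolutely_integrable_1 simp: has_integral_iff)
  then have "(\<lambda>t. \<bar>S * exp t\<bar> * f (S * exp t)) absolutely_integrable_on UNIV
      \<and> integral UNIV (\<lambda>t. \<bar>S * exp t\<bar> * f (S * exp t)) = Gamma s"
    by (subst has_absolute_integral_change_of_variables_1'[of UNIV "\<lambda>t. S * exp t" "\<lambda>t. S * exp t"])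
       (use S in \<open>auto intro!: derivative_eq_intros inj_onI simp: img\<close>)
  moreover have "\<bar>S * exp t\<bar> * f (S * exp t) = S powr s * exp (s * t - S * exp t)" for t
  proof -
    have "S * exp t = exp (ln S + t)" using S by (simp add: exp_add)
    then show ?thesis
      using S by (simp add: f_def powr_def exp_diff[symmetric] exp_add[symmetric] algebra_simps)
  qed
  ultimately have "((\<lambda>t. S powr s * exp (s * t - S * exp t)) has_integral Gamma s) UNIV"
    using set_lebesgue_integral_eq_integral by (auto simp: has_integral_iff absolutely_integrable_on_def)
  then have "(\<integral>\<^sup>+t. ennreal (S powr s * exp (s * t - S * exp t)) \<partial>lborel) = ennreal (Gamma s)"
    by (intro nn_integral_has_integral_lborel) auto
  then have I: "ennreal (S powr s) * (\<integral>\<^sup>+t. ennreal (exp (s * t - S * exp t)) \<partial>lborel) = ennreal (Gamma s)"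
    by (subst nn_integral_cmult[symmetric]) (auto simp: ennreal_mult)
  have "ennreal (S powr - s) * ennreal (S powr s) = 1"
    using S by (simp add: ennreal_mult'[symmetric] powr_add[symmetric])
  then have "(\<integral>\<^sup>+t. ennreal (exp (s * t - S * exp t)) \<partial>lborel) = ennreal (S powr - s) * ennreal (Gamma s)"
    by (simp flip: I add: mult.assoc[symmetric])
  then show ?thesis
    using Gamma_real_pos[OF s] by (simp add: ennreal_mult' mult.commute)
qed

lemma distr_PiM_lborel_translate:
  fixes c :: "'i \<Rightarrow> real"
  assumes I: "finite I"
  shows "distr (PiM I (\<lambda>_. lborel)) (PiM I (\<lambda>_. lborel)) (\<lambda>x. \<lambda>i\<in>I. x i + c i) = PiM I (\<lambda>_. lborel)"
proof -
  interpret product_sigma_finite "\<lambda>_. lborel :: real measure" by standard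
  show ?thesis
  proof (rule PiM_eqI[OF I])
    fix A assume A: "\<And>i. i \<in> I \<Longrightarrow> A i \<in> sets (lborel :: real measure)"
    have translate: "emeasure lborel ((+) (c i) -` A i) = emeasure lborel (A i)" if "i \<in> I" for i
    proof -
      have "emeasure lborel (A i) = emeasure (distr lborel borel ((+) (c i))) (A i)"
        by (simp add: lborel_distr_plus)
      also have "\<dots> = emeasure lborel ((+) (c i) -` A i)"
        using A that by (subst emeasure_distr) auto
      finally show ?thesis ..
    qed
    have "(\<lambda>x. \<lambda>i\<in>I. x i + c i) -` Pi\<^sub>E I A \<inter> space (PiM I (\<lambda>_. lborel))
        = Pi\<^sub>E I (\<lambda>i. (+) (c i) -` A i)"
      by (auto simp: space_PiM PiE_def Pi_def extensional_def add.commute)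
    then have "emeasure (distr (PiM I (\<lambda>_. lborel)) (PiM I (\<lambda>_. lborel)) (\<lambda>x. \<lambda>i\<in>I. x i + c i)) (Pi\<^sub>E I A)
        = emeasure (PiM I (\<lambda>_. lborel)) (Pi\<^sub>E I (\<lambda>i. (+) (c i) -` A i))"
      using A I by (subst emeasure_distr) (auto intro!: sets_PiM_I_finite)
    also have "\<dots> = (\<Prod>i\<in>I. emeasure lborel (A i))"
    proof (subst emeasure_PiM)
      have "((+) (c i) :: real \<Rightarrow> real) \<in> borel_measurable borel" for i by simp
      then show "\<And>i. i \<in> I \<Longrightarrow> (+) (c i) -` A i \<in> sets lborel"
        using A by (auto intro: measurable_sets_borel[of _ borel])
    qed (use I translate in auto)
    finally show "emeasure (distr (PiM I (\<lambda>_. lborel)) (PiM I (\<lambda>_. lborel)) (\<lambda>x. \<lambda>i\<in>I. x i + c i)) (Pi\<^sub>E I A)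
        = (\<Prod>i\<in>I. emeasure lborel (A i))" .
  qed simp
qed

lemma nn_integral_PiM_lborel_translate:
  fixes c :: "'i \<Rightarrow> real"
  assumes "finite I" and [measurable]: "f \<in> borel_measurable (PiM I (\<lambda>_. lborel))"
  shows "(\<integral>\<^sup>+x. f (\<lambda>i\<in>I. x i + c i) \<partial>PiM I (\<lambda>_. lborel)) = (\<integral>\<^sup>+x. f x \<partial>PiM I (\<lambda>_. lborel))"
proof -
  have "(\<integral>\<^sup>+x. f (\<lambda>i\<in>I. x i + c i) \<partial>PiM I (\<lambda>_. lborel))
      = (\<integral>\<^sup>+x. f x \<partial>distr (PiM I (\<lambda>_. lborel)) (PiM I (\<lambda>_. lborel)) (\<lambda>x. \<lambda>i\<in>I. x i + c i))"
    by (rule nn_integral_distr[symmetric]) measurable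
  then show ?thesis
    by (simp add: distr_PiM_lborel_translate[OF \<open>finite I\<close>])
qed

lemma nn_integral_PiM_lborel_insert_shear:
  fixes f :: "('i \<Rightarrow> real) \<Rightarrow> ennreal"
  assumes I: "finite I" "i \<notin> I" and f[measurable]: "f \<in> borel_measurable (PiM (insert i I) (\<lambda>_. lborel))"
  shows "(\<integral>\<^sup>+x. f x \<partial>PiM (insert i I) (\<lambda>_. lborel)) =
    (\<integral>\<^sup>+x. \<integral>\<^sup>+t. f (\<lambda>j\<in>insert i I. (if j = i then 0 else x j) + t) \<partial>lborel \<partial>PiM I (\<lambda>_. lborel))"
proof -
  interpret finite_product_sigma_finite "\<lambda>_. lborel :: real measure" I by standard (simp add: I)
  interpret pair_sigma_finite lborel "PiM I (\<lambda>_. lborel :: real measure)" by standard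
  have shear: "(\<lambda>j\<in>I. x j + t)(i := t) = (\<lambda>j\<in>insert i I. (if j = i then 0 else x j) + t)"
    for x :: "'i \<Rightarrow> real" and t :: real
    using I by (auto simp: fun_eq_iff)
  have "(\<integral>\<^sup>+x. f x \<partial>PiM (insert i I) (\<lambda>_. lborel))
      = (\<integral>\<^sup>+t. \<integral>\<^sup>+x. f (x(i := t)) \<partial>PiM I (\<lambda>_. lborel) \<partial>lborel)"
    using I by (rule product_nn_integral_insert_rev) measurable
  also have "\<dots> = (\<integral>\<^sup>+t. \<integral>\<^sup>+x. f ((\<lambda>j\<in>I. x j + t)(i := t)) \<partial>PiM I (\<lambda>_. lborel) \<partial>lborel)"
    using I by (intro nn_integral_cong nn_integral_PiM_lborel_translate[symmetric]) measurable
  also have "\<dots> = (\<integral>\<^sup>+x. \<integral>\<^sup>+t. f ((\<lambda>j\<in>I. x j + t)(i := t)) \<partial>lborel \<partial>PiM I (\<lambda>_. lborel))"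
  proof (unfold shear, rule Fubini'[symmetric])
    have "(\<lambda>p. \<lambda>j\<in>insert i I. (if j = i then 0 else snd p j) + fst p)
        \<in> lborel \<Otimes>\<^sub>M PiM I (\<lambda>_. lborel) \<rightarrow>\<^sub>M PiM (insert i I) (\<lambda>_. lborel)"
    proof (rule measurable_restrict)
      fix j assume "j \<in> insert i I"
      then show "(\<lambda>p. (if j = i then 0 else snd p j) + fst p)
          \<in> lborel \<Otimes>\<^sub>M PiM I (\<lambda>_. lborel) \<rightarrow>\<^sub>M lborel"
        by (cases "j = i") simp_all
    qed
    then show "case_prod (\<lambda>t x. f (\<lambda>j\<in>insert i I. (if j = i then 0 else x j) + t))
        \<in> borel_measurable (lborel \<Otimes>\<^sub>M PiM I (\<lambda>_. lborel))"
      unfolding case_prod_beta' by (rule measurable_compose[OF _ f])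
  qed
  finally show ?thesis unfolding shear .
qed

(* Components outside the index set are the constant undefined on the product space; this lets
   measurable handle indices such as j - 1 that are not known to lie in I. *)
lemma measurable_component_PiM_lborel[measurable]:
  "(\<lambda>x. x i) \<in> borel_measurable (PiM I (\<lambda>_. lborel :: real measure))"
proof (cases "i \<in> I")
  case False
  then have "x i = undefined" if "x \<in> space (PiM I (\<lambda>_. lborel))" for x :: "'a \<Rightarrow> real"
    using that by (auto simp: space_PiM PiE_def extensional_def)
  then show ?thesis
    by (subst measurable_cong[where g = "\<lambda>_. undefined"]) auto
qed simp

definition lg_weight :: "nat \<Rightarrow> (nat \<Rightarrow> real) \<Rightarrow> (nat \<Rightarrow> real) \<Rightarrow> real" where
  "lg_weight N \<beta> L = (\<Prod>j\<in>{1..N}. fLG (\<beta> j) (path0 L j - path0 L (j - 1)))"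

definition coupling_sum :: "nat \<Rightarrow> (nat \<Rightarrow> real) \<Rightarrow> (nat \<Rightarrow> real) \<Rightarrow> real" where
  "coupling_sum N L1 L2 = (\<Sum>j\<in>{1..N}. exp (path0 L2 j - path0 L1 (j - 1)))"

definition PstatLG_numer :: "nat \<Rightarrow> (nat \<Rightarrow> real) \<Rightarrow> real \<Rightarrow> real \<Rightarrow> (nat \<Rightarrow> real) \<Rightarrow> ennreal" where
  "PstatLG_numer N \<beta> u v L1 =
     (\<integral>\<^sup>+ L2. ennreal (Vfun N u v L1 L2 * LGRW N \<beta> L1 L2) \<partial>PiM {1..N} (\<lambda>_. lborel))"

lemma LGRW_eq_lg_weight:
  "LGRW N \<beta> L1 L2 = lg_weight N \<beta> L1 * lg_weight N \<beta> L2 / (\<Prod>j\<in>{1..N}. Gamma (\<beta> j)) ^ 2"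
  unfolding LGRW_def lg_weight_def power2_eq_square
  by (simp add: prod.distrib prod_dividef)

lemma Vfun_eq_coupling_sum:
  assumes "N \<ge> 1"
  shows "Vfun N u v L1 L2 = coupling_sum N L1 L2 powr - (u + v) * exp (- v * (L1 N - L2 N))"
  using assms by (simp add: Vfun_def coupling_sum_def path0_def)

lemma coupling_sum_pos: "N \<ge> 1 \<Longrightarrow> coupling_sum N L1 L2 > 0"
  unfolding coupling_sum_def by (intro sum_pos) auto

lemma wtGP_restrict: "wtGP N \<beta> u v l1 (restrict l2 {..N}) = wtGP N \<beta> u v l1 l2"
  unfolding wtGP_def by (intro arg_cong2[where f = "(*)"] prod.cong) auto

lemma wtGP_sheared:
  assumes "N \<ge> 1"
  shows "wtGP N \<beta> u v (\<lambda>j. a + path0 L1 j) (\<lambda>j. path0 L2 j + (a + t)) =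
    exp ((u + v) * t - coupling_sum N L1 L2 * exp t) *
    (exp (- v * (L1 N - L2 N)) * lg_weight N \<beta> L1 * lg_weight N \<beta> L2)"
proof -
  have coupling: "(\<Prod>j\<in>{1..N}. exp (- exp (- (a + path0 L1 (j - 1) - (path0 L2 j + (a + t))))))
      = exp (- (coupling_sum N L1 L2 * exp t))"
  proof -
    have "exp (- (a + path0 L1 (j - 1) - (path0 L2 j + (a + t))))
        = exp (path0 L2 j - path0 L1 (j - 1)) * exp t" for j
      by (simp add: exp_add[symmetric] algebra_simps)
    then show ?thesis
      by (simp add: coupling_sum_def exp_sum[symmetric] sum_negf sum_distrib_right)
  qed
  have "wtGP N \<beta> u v (\<lambda>j. a + path0 L1 j) (\<lambda>j. path0 L2 j + (a + t)) =
      exp (- u * (a + path0 L1 0 - (path0 L2 0 + (a + t))) - v * (a + path0 L1 N - (path0 L2 N + (a + t))))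
      * (lg_weight N \<beta> L1 * lg_weight N \<beta> L2 * exp (- (coupling_sum N L1 L2 * exp t)))"
    by (simp add: wtGP_def lg_weight_def prod.distrib coupling[symmetric])
  also have "\<dots> = exp ((u + v) * t - coupling_sum N L1 L2 * exp t) *
      (exp (- v * (L1 N - L2 N)) * lg_weight N \<beta> L1 * lg_weight N \<beta> L2)"
    using assms by (simp add: path0_def exp_add[symmetric] exp_diff[symmetric] algebra_simps)
  finally show ?thesis .
qed

lemma nn_integral_wtGP_offset:
  assumes N: "N \<ge> 1" and uv: "u + v > 0" and \<beta>: "\<And>j. j \<in> {1..N} \<Longrightarrow> \<beta> j > 0"
  shows "(\<integral>\<^sup>+t. ennreal (wtGP N \<beta> u v (\<lambda>j. a + path0 L1 j) (\<lambda>j. path0 L2 j + (a + t))) \<partial>lborel) =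
    ennreal (Gamma (u + v) * (\<Prod>j\<in>{1..N}. Gamma (\<beta> j)) ^ 2) * ennreal (Vfun N u v L1 L2 * LGRW N \<beta> L1 L2)"
proof -
  define S where "S = coupling_sum N L1 L2"
  define W where "W = exp (- v * (L1 N - L2 N)) * lg_weight N \<beta> L1 * lg_weight N \<beta> L2"
  have S: "S > 0" unfolding S_def using N by (rule coupling_sum_pos)
  have W: "W \<ge> 0" unfolding W_def lg_weight_def by (simp add: fLG_def prod_nonneg)
  have "(\<Prod>j\<in>{1..N}. Gamma (\<beta> j)) \<noteq> 0"
    using \<beta> by (intro prod_pos[THEN less_imp_neq, symmetric]) (auto intro: Gamma_real_pos)
  then have rearranged: "Gamma (u + v) * S powr - (u + v) * W =
      Gamma (u + v) * (\<Prod>j\<in>{1..N}. Gamma (\<beta> j)) ^ 2 * (Vfun N u v L1 L2 * LGRW N \<beta> L1 L2)"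
    unfolding W_def S_def Vfun_eq_coupling_sum[OF N] LGRW_eq_lg_weight by (simp add: field_simps)
  have "(\<integral>\<^sup>+t. ennreal (wtGP N \<beta> u v (\<lambda>j. a + path0 L1 j) (\<lambda>j. path0 L2 j + (a + t))) \<partial>lborel)
      = (\<integral>\<^sup>+t. ennreal (exp ((u + v) * t - S * exp t)) \<partial>lborel) * ennreal W"
    using N W by (simp add: wtGP_sheared S_def W_def ennreal_mult' nn_integral_multc)
  also have "\<dots> = ennreal (Gamma (u + v) * S powr - (u + v) * W)"
    using S W Gamma_real_pos[OF uv] by (simp add: nn_integral_exp_minus_exp[OF uv S] ennreal_mult')
  also have "\<dots> = ennreal (Gamma (u + v) * (\<Prod>j\<in>{1..N}. Gamma (\<beta> j)) ^ 2) *
      ennreal (Vfun N u v L1 L2 * LGRW N \<beta> L1 L2)"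
    unfolding rearranged using Gamma_real_pos[OF uv] by (simp add: ennreal_mult')
  finally show ?thesis .
qed

lemma wtP_eq_PstatLG_numer:
  assumes N: "N \<ge> 1" and uv: "u + v > 0" and \<beta>: "\<And>j. j \<in> {1..N} \<Longrightarrow> \<beta> j > 0"
  shows "wtP N \<beta> u v (\<lambda>j. a + path0 L j) =
    ennreal (Gamma (u + v) * (\<Prod>j\<in>{1..N}. Gamma (\<beta> j)) ^ 2) * PstatLG_numer N \<beta> u v L"
proof -
  define w where "w = wtGP N \<beta> u v (\<lambda>j. a + path0 L j)"
  have [measurable]: "w \<in> borel_measurable (PiM I (\<lambda>_. lborel))" for I
    unfolding w_def wtGP_def fLG_def path0_def by measurable
  have [measurable]: "(\<lambda>t. w (\<lambda>j. path0 L2 j + t)) \<in> borel_measurable borel" for L2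
    unfolding w_def wtGP_def fLG_def path0_def by measurable
  have [measurable]: "(\<lambda>L2. ennreal (Vfun N u v L L2 * LGRW N \<beta> L L2)) \<in> borel_measurable (PiM I (\<lambda>_. lborel))" for I
    unfolding Vfun_def LGRW_def fLG_def path0_def by measurable
  have atMost: "{..N} = insert 0 {1..N}" by auto
  have "wtP N \<beta> u v (\<lambda>j. a + path0 L j) = (\<integral>\<^sup>+l2. ennreal (w l2) \<partial>PiM (insert 0 {1..N}) (\<lambda>_. lborel))"
    unfolding wtP_def w_def atMost ..
  also have "\<dots> = (\<integral>\<^sup>+L2. \<integral>\<^sup>+t. ennreal (w (\<lambda>j\<in>{..N}. path0 L2 j + t)) \<partial>lborel \<partial>PiM {1..N} (\<lambda>_. lborel))"
    by (subst nn_integral_PiM_lborel_insert_shear) (auto simp: atMost path0_def)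
  also have "\<dots> = (\<integral>\<^sup>+L2. \<integral>\<^sup>+t. ennreal (w (\<lambda>j. path0 L2 j + (a + t))) \<partial>lborel \<partial>PiM {1..N} (\<lambda>_. lborel))"
  proof (rule nn_integral_cong)
    fix L2 :: "nat \<Rightarrow> real"
    have "(\<integral>\<^sup>+t. ennreal (w (\<lambda>j\<in>{..N}. path0 L2 j + t)) \<partial>lborel)
        = (\<integral>\<^sup>+t. ennreal (w (\<lambda>j. path0 L2 j + t)) \<partial>lborel)"
      by (simp add: w_def wtGP_restrict)
    also have "\<dots> = (\<integral>\<^sup>+t. ennreal (w (\<lambda>j. path0 L2 j + (a + t))) \<partial>lborel)"
      by (subst nn_integral_real_affine[of _ 1 a]) auto
    finally show "(\<integral>\<^sup>+t. ennreal (w (\<lambda>j\<in>{..N}. path0 L2 j + t)) \<partial>lborel)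
        = (\<integral>\<^sup>+t. ennreal (w (\<lambda>j. path0 L2 j + (a + t))) \<partial>lborel)" .
  qed
  also have "\<dots> = (\<integral>\<^sup>+L2. ennreal (Gamma (u + v) * (\<Prod>j\<in>{1..N}. Gamma (\<beta> j)) ^ 2) *
      ennreal (Vfun N u v L L2 * LGRW N \<beta> L L2) \<partial>PiM {1..N} (\<lambda>_. lborel))"
    unfolding w_def using nn_integral_wtGP_offset[OF N uv \<beta>] by simp
  also have "\<dots> = ennreal (Gamma (u + v) * (\<Prod>j\<in>{1..N}. Gamma (\<beta> j)) ^ 2) * PstatLG_numer N \<beta> u v L"
    unfolding PstatLG_numer_def by (rule nn_integral_cmult) measurable
  finally show ?thesis .
qed

lemma PstatLG_numer_cong:
  assumes "\<And>j. j \<in> {1..N} \<Longrightarrow> L' j = L j"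
  shows "PstatLG_numer N \<beta> u v L' = PstatLG_numer N \<beta> u v L"
proof -
  have path0: "path0 L' j = path0 L j" if "j \<le> N" for j
    using assms that by (auto simp: path0_def)
  have "(\<Sum>j\<in>{1..N}. exp (path0 L2 j - path0 L' (j - 1))) = (\<Sum>j\<in>{1..N}. exp (path0 L2 j - path0 L (j - 1)))"
    "LGRW N \<beta> L' L2 = LGRW N \<beta> L L2" for L2
    unfolding LGRW_def by (auto simp: path0 intro!: sum.cong prod.cong)
  then have "Vfun N u v L' = Vfun N u v L" "LGRW N \<beta> L' = LGRW N \<beta> L"
    unfolding Vfun_def by (auto simp: path0)
  then show ?thesis
    unfolding PstatLG_numer_def by simp
qed

lemma ZLG_eq_EV:
  assumes N: "N \<ge> 1" and uv: "u + v > 0" and \<beta>: "\<And>j. j \<in> {1..N} \<Longrightarrow> \<beta> j > 0"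
  shows "ZLG N \<beta> u v a = ennreal (Gamma (u + v) * (\<Prod>j\<in>{1..N}. Gamma (\<beta> j)) ^ 2) * EV N \<beta> u v"
proof -
  define c where "c = ennreal (Gamma (u + v) * (\<Prod>j\<in>{1..N}. Gamma (\<beta> j)) ^ 2)"
  interpret finite_product_sigma_finite "\<lambda>_. lborel :: real measure" "{1..N}" by standard simp
  have numer_measurable: "(\<lambda>L. PstatLG_numer N \<beta> u v (\<lambda>j. L j - b)) \<in> borel_measurable (PiM {1..N} (\<lambda>_. lborel))"
    for b
    unfolding PstatLG_numer_def Vfun_def LGRW_def fLG_def path0_def by measurable
  have "l(0 := a) = (\<lambda>j. a + path0 (\<lambda>j. l j - a) j)" for l :: "nat \<Rightarrow> real"
    by (auto simp: path0_def)
  then have "ZLG N \<beta> u v a = (\<integral>\<^sup>+l. c * PstatLG_numer N \<beta> u v (\<lambda>j. l j - a) \<partial>PiM {1..N} (\<lambda>_. lborel))"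
    unfolding ZLG_def c_def \<open>\<And>l. l(0 := a) = _\<close>
    by (intro nn_integral_cong wtP_eq_PstatLG_numer[OF N uv \<beta>])
  also have "\<dots> = (\<integral>\<^sup>+L. c * PstatLG_numer N \<beta> u v (\<lambda>j. (\<lambda>i\<in>{1..N}. L i + a) j - a) \<partial>PiM {1..N} (\<lambda>_. lborel))"
    using numer_measurable by (intro nn_integral_PiM_lborel_translate[symmetric]) auto
  also have "\<dots> = (\<integral>\<^sup>+L. c * PstatLG_numer N \<beta> u v L \<partial>PiM {1..N} (\<lambda>_. lborel))"
    by (intro nn_integral_cong arg_cong2[where f = "(*)"] refl PstatLG_numer_cong) auto
  also have "\<dots> = c * EV N \<beta> u v"
    unfolding EV_def PstatLG_numer_def[symmetric]
    by (rule nn_integral_cmult) (use numer_measurable[of 0] in simp)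
  finally show ?thesis unfolding c_def .
qed

lemma PLG_eq_PstatLG:
  assumes N: "N \<ge> 1" and uv: "u + v > 0" and \<beta>: "\<And>j. j \<in> {1..N} \<Longrightarrow> \<beta> j > 0"
  shows "PLG N \<beta> u v a L = PstatLG N \<beta> u v L"
proof -
  define c where "c = Gamma (u + v) * (\<Prod>j\<in>{1..N}. Gamma (\<beta> j)) ^ 2"
  have "(\<Prod>j\<in>{1..N}. Gamma (\<beta> j)) > 0"
    using \<beta> by (intro prod_pos) (simp add: Gamma_real_pos)
  then have "c > 0"
    unfolding c_def using uv by (intro mult_pos_pos zero_less_power Gamma_real_pos)
  have "(\<lambda>j. if j = 0 then a else a + L j) = (\<lambda>j. a + path0 L j)"
    by (auto simp: path0_def)
  then have "PLG N \<beta> u v a L = wtP N \<beta> u v (\<lambda>j. a + path0 L j) / ZLG N \<beta> u v a"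
    unfolding PLG_def by simp
  also have "\<dots> = PstatLG_numer N \<beta> u v L * ennreal c / (EV N \<beta> u v * ennreal c)"
    by (simp only: wtP_eq_PstatLG_numer[OF N uv \<beta>] ZLG_eq_EV[OF N uv \<beta>] c_def mult.commute)
  also have "\<dots> = PstatLG N \<beta> u v L"
    using \<open>c > 0\<close> by (simp add: divide_mult_eq PstatLG_def PstatLG_numer_def)
  finally show ?thesis .
qed

theorem proposition3p14:
  fixes N :: nat and k :: int and \<alpha> :: "nat \<Rightarrow> real" and u v :: real
    and \<beta> :: "nat \<Rightarrow> real"
  assumes "N \<ge> 1"
    and "\<And>i. i < N \<Longrightarrow> \<alpha> i > 0 \<and> \<alpha> i + u > 0 \<and> \<alpha> i + v > 0"
    and "u + v > 0"
    and "\<And>j. \<beta> j = \<alpha> (nat ((k + int j) mod int N))"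
  shows "\<forall>a L. PLG N \<beta> u v a L = PstatLG N \<beta> u v L"
proof -
  (* The bounds alpha_i + u > 0 and alpha_i + v > 0 only serve to make Z finite; the identity
     of the two densities holds in ennreal without them. *)
  have "\<beta> j > 0" for j
  proof -
    have "nat ((k + int j) mod int N) < N"
      using assms(1) by (simp add: nat_less_iff)
    then show ?thesis using assms(2,4) by simp
  qed
  then show ?thesis
    using PLG_eq_PstatLG[OF assms(1,3)] by blast
qed

end
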